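(* Let $(Y,\lambda)$ be a Landsberg contact manifold, with contact canonical frame $\{R,X_1,X_2\}$ and functions $I,J,K$ where $J\equiv0$. Let $\psi$ be a flow line of the vector field $X_2$ and write $K(t)=K\circ\psi(t)$, $I(t)=I\circ\psi(t)$. Then $$K(t)=K(0)\,e^{-\int_0^t I(\tau)\,d\tau}.$$ In particular, if $y\colon\mathbb{R}/T\mathbb{Z}\to Y$ is a periodic orbit of $X_2$ such that $K(T)=K(0)\neq0$ (with $K(t)=K\circ y(t)$), then $\int_0^T I\circ y(\tau)\,d\tau=0$.
   Context: For a contact form $\lambda$ on a closed $3$-manifold $Y$ with Reeb vector field $R$, a contact canonical frame is a pair of vector fields $X_1,X_2$ tangent to $\ker\lambda$ together with smooth functions $I,J,K\colon Y\to\mathbb{R}$ such that $[X_2,R]=X_1$, $[X_1,X_2]=R+IX_1+JX_2$, $[R,X_1]=KX_2$. $(Y,\lambda)$ is called a Landsberg contact manifold if it admits a contact canonical frame with $J\equiv 0$. *)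

theory Defs
  imports "HOL-Analysis.Analysis" "HOL-Probability.Probability"
begin

text \<open>Closed manifolds are modelled (via the Whitney embedding theorem) as compact
smooth embedded submanifolds of a Euclidean space.\<close>

fun ck_on :: "nat \<Rightarrow> 'a::euclidean_space set \<Rightarrow> ('a \<Rightarrow> 'b::real_normed_vector) \<Rightarrow> bool" where
  "ck_on 0 U f = continuous_on U f"
| "ck_on (Suc k) U f = ((\<forall>x\<in>U. f differentiable (at x)) \<and>
      (\<forall>v. ck_on k U (\<lambda>x. frechet_derivative f (at x) v)))"

definition smooth_on :: "'a::euclidean_space set \<Rightarrow> ('a \<Rightarrow> 'b::real_normed_vector) \<Rightarrow> bool" where
  "smooth_on U f \<longleftrightarrow> open U \<and> (\<forall>k. ck_on k U f)"

definition submanifold :: "nat \<Rightarrow> 'a::euclidean_space set \<Rightarrow> bool" where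
  "submanifold d M \<longleftrightarrow> (\<forall>p\<in>M. \<exists>U V (\<phi>::'a\<Rightarrow>'a) \<psi> B. open U \<and> p \<in> U \<and> open V \<and>
      smooth_on U \<phi> \<and> smooth_on V \<psi> \<and> \<phi> ` U = V \<and> (\<forall>x\<in>U. \<psi> (\<phi> x) = x) \<and>
      (\<forall>y\<in>V. \<phi> (\<psi> y) = y) \<and> B \<subseteq> Basis \<and> card B = d \<and> \<phi> ` (U \<inter> M) = V \<inter> span B)"

definition closed_manifold :: "nat \<Rightarrow> 'a::euclidean_space set \<Rightarrow> bool" where
  "closed_manifold d M \<longleftrightarrow> compact M \<and> submanifold d M"

definition smooth_fun :: "'a::euclidean_space set \<Rightarrow> ('a \<Rightarrow> 'b::real_normed_vector) \<Rightarrow> bool" where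
  "smooth_fun M f \<longleftrightarrow> (\<forall>p\<in>M. \<exists>U g. p \<in> U \<and> smooth_on U g \<and> (\<forall>x\<in>U \<inter> M. g x = f x))"

definition tangent_space :: "'a::euclidean_space set \<Rightarrow> 'a \<Rightarrow> 'a set" where
  "tangent_space M p = {v. \<exists>\<gamma>. (\<forall>t. \<gamma> t \<in> M) \<and> \<gamma> 0 = p \<and> (\<gamma> has_vector_derivative v) (at 0)}"

definition vector_field :: "'a::euclidean_space set \<Rightarrow> ('a \<Rightarrow> 'a) \<Rightarrow> bool" where
  "vector_field M X \<longleftrightarrow> smooth_fun M X \<and> (\<forall>p\<in>M. X p \<in> tangent_space M p)"

definition dir_deriv :: "'a::euclidean_space set \<Rightarrow> ('a \<Rightarrow> 'b::real_normed_vector) \<Rightarrow> 'a \<Rightarrow> 'a \<Rightarrow> 'b" where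
  "dir_deriv M f p v = frechet_derivative
     (SOME g. \<exists>U. p \<in> U \<and> smooth_on U g \<and> (\<forall>x\<in>U \<inter> M. g x = f x)) (at p) v"

definition lie_bracket :: "'a::euclidean_space set \<Rightarrow> ('a \<Rightarrow> 'a) \<Rightarrow> ('a \<Rightarrow> 'a) \<Rightarrow> 'a \<Rightarrow> 'a" where
  "lie_bracket M X Z p = dir_deriv M Z p (X p) - dir_deriv M X p (Z p)"

text \<open>A 1-form lambda on M is represented by a smooth map alpha: lambda_p(v) = alpha(p) . v
for tangent vectors v.  Its exterior derivative at p:\<close>
definition form_d :: "'a::euclidean_space set \<Rightarrow> ('a \<Rightarrow> 'a) \<Rightarrow> 'a \<Rightarrow> 'a \<Rightarrow> 'a \<Rightarrow> real" where
  "form_d M \<alpha> p u v = dir_deriv M \<alpha> p u \<bullet> v - dir_deriv M \<alpha> p v \<bullet> u"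

text \<open>(lambda wedge d lambda)_p (u,v,w)\<close>
definition contact_vol :: "'a::euclidean_space set \<Rightarrow> ('a \<Rightarrow> 'a) \<Rightarrow> 'a \<Rightarrow> 'a \<Rightarrow> 'a \<Rightarrow> 'a \<Rightarrow> real" where
  "contact_vol M \<alpha> p u v w =
     (\<alpha> p \<bullet> u) * form_d M \<alpha> p v w - (\<alpha> p \<bullet> v) * form_d M \<alpha> p u w + (\<alpha> p \<bullet> w) * form_d M \<alpha> p u v"

definition contact_form :: "'a::euclidean_space set \<Rightarrow> ('a \<Rightarrow> 'a) \<Rightarrow> bool" where
  "contact_form M \<alpha> \<longleftrightarrow> smooth_fun M \<alpha> \<and>
     (\<forall>p\<in>M. \<exists>u\<in>tangent_space M p. \<exists>v\<in>tangent_space M p. \<exists>w\<in>tangent_space M p.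
        contact_vol M \<alpha> p u v w \<noteq> 0)"

definition reeb_field :: "'a::euclidean_space set \<Rightarrow> ('a \<Rightarrow> 'a) \<Rightarrow> ('a \<Rightarrow> 'a) \<Rightarrow> bool" where
  "reeb_field M \<alpha> R \<longleftrightarrow> vector_field M R \<and>
     (\<forall>p\<in>M. \<alpha> p \<bullet> R p = 1 \<and> (\<forall>v\<in>tangent_space M p. form_d M \<alpha> p (R p) v = 0))"

definition contact_canonical_frame ::
  "'a::euclidean_space set \<Rightarrow> ('a \<Rightarrow> 'a) \<Rightarrow> ('a \<Rightarrow> 'a) \<Rightarrow> ('a \<Rightarrow> 'a) \<Rightarrow> ('a \<Rightarrow> 'a)
    \<Rightarrow> ('a \<Rightarrow> real) \<Rightarrow> ('a \<Rightarrow> real) \<Rightarrow> ('a \<Rightarrow> real) \<Rightarrow> bool" where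
  "contact_canonical_frame M \<alpha> R X1 X2 I J K \<longleftrightarrow>
     vector_field M X1 \<and> vector_field M X2 \<and> smooth_fun M I \<and> smooth_fun M J \<and> smooth_fun M K \<and>
     (\<forall>p\<in>M. \<alpha> p \<bullet> X1 p = 0 \<and> \<alpha> p \<bullet> X2 p = 0 \<and>
        lie_bracket M X2 R p = X1 p \<and>
        lie_bracket M X1 X2 p = R p + I p *\<^sub>R X1 p + J p *\<^sub>R X2 p \<and>
        lie_bracket M R X1 p = K p *\<^sub>R X2 p)"

definition flow_line :: "'a::euclidean_space set \<Rightarrow> ('a \<Rightarrow> 'a) \<Rightarrow> (real \<Rightarrow> 'a) \<Rightarrow> bool" where
  "flow_line M X \<psi> \<longleftrightarrow> (\<forall>t. \<psi> t \<in> M \<and> (\<psi> has_vector_derivative X (\<psi> t)) (at t))"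

end

theory Submission
  imports Defs
begin

text \<open>Along a flow line \<open>\<psi>\<close> of \<open>X\<^sub>2\<close> the function \<open>K \<circ> \<psi>\<close> solves the linear equation
  \<open>k' = -(I \<circ> \<psi>) k\<close>, because \<open>X\<^sub>2(K) = -I K\<close> on a Landsberg contact manifold; integrating gives the
  formula, and for a periodic orbit with \<open>K(T) = K(0) \<noteq> 0\<close> the exponential factor must be \<open>1\<close>.

  The identity \<open>X\<^sub>2(K) = -I K\<close> comes from the Jacobi identity for \<open>X\<^sub>1, X\<^sub>2, R\<close>: with \<open>J = 0\<close> the
  frame relations turn it into \<open>(X\<^sub>2(K) + I K) X\<^sub>2 + R(I) X\<^sub>1 = 0\<close>, and the coefficient of \<open>X\<^sub>2\<close>
  vanishes because \<open>d\<lambda>(X\<^sub>1, X\<^sub>2) = -\<lambda>[X\<^sub>1, X\<^sub>2] = -1\<close>. Brackets on \<open>Y\<close> are computed through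
  smooth local extensions to the ambient Euclidean space, where the Jacobi identity follows from
  the symmetry of second derivatives. Derivatives in tangent directions only see values on \<open>Y\<close>,
  so the frame relations, known only on \<open>Y\<close>, may be substituted inside brackets.\<close>

abbreviation fderiv :: "('a::real_normed_vector \<Rightarrow> 'b::real_normed_vector) \<Rightarrow> 'a \<Rightarrow> 'a \<Rightarrow> 'b" where
  "fderiv f x \<equiv> frechet_derivative f (at x)"

lemma has_derivative_fderiv: "f differentiable (at x) \<Longrightarrow> (f has_derivative fderiv f x) (at x)"
  using frechet_derivative_works by blast

lemma linear_fderiv: "f differentiable (at x) \<Longrightarrow> linear (fderiv f x)"
  using has_derivative_fderiv has_derivative_linear by blast

lemma fderiv_eq: "(f has_derivative f') (at x) \<Longrightarrow> fderiv f x v = f' v"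
  using frechet_derivative_at by metis

lemma eventually_at_of_nhds: "eventually P (nhds x) \<Longrightarrow> eventually P (at x within S)"
  unfolding eventually_at_filter by (auto elim: eventually_mono)

section \<open>Derivatives in directions tangent to a subset\<close>

lemma has_vector_derivative_along_curve:
  assumes "g differentiable (at (\<gamma> t))" and "\<forall>\<^sub>F x in nhds (\<gamma> t). x \<in> M \<longrightarrow> g x = f x"
    and "\<forall>s. \<gamma> s \<in> M" and "(\<gamma> has_vector_derivative v) (at t)"
  shows "((\<lambda>s. f (\<gamma> s)) has_vector_derivative fderiv g (\<gamma> t) v) (at t)"
proof -
  have "((\<lambda>s. g (\<gamma> s)) has_derivative (\<lambda>h. fderiv g (\<gamma> t) (h *\<^sub>R v))) (at t)"
    using has_derivative_compose[of \<gamma> "\<lambda>h. h *\<^sub>R v", OF _ has_derivative_fderiv] assms(1,4)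
    by (simp add: has_vector_derivative_def)
  moreover have "\<forall>\<^sub>F s in at t. g (\<gamma> s) = f (\<gamma> s)"
  proof -
    have "(\<gamma> \<longlongrightarrow> \<gamma> t) (at t)"
      using assms(4) has_vector_derivative_continuous isCont_def by blast
    then show ?thesis
      using assms(2,3) by (auto elim: eventually_mono dest: filterlim_iff[THEN iffD1, rule_format])
  qed
  moreover have "g (\<gamma> t) = f (\<gamma> t)"
    using assms(2,3) eventually_nhds_x_imp_x by fastforce
  ultimately show ?thesis
    unfolding has_vector_derivative_def
    using has_derivative_transform_eventually linear_fderiv[OF assms(1)]
    by (fastforce simp: linear_scale)
qed

lemma fderiv_tangent_eq:
  assumes "F differentiable (at p)" and "G differentiable (at p)"
    and "\<forall>\<^sub>F x in nhds p. x \<in> M \<longrightarrow> F x = G x" and "v \<in> tangent_space M p"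
  shows "fderiv F p v = fderiv G p v"
proof -
  obtain \<gamma> where \<gamma>: "\<forall>t. \<gamma> t \<in> M" "\<gamma> 0 = p" "(\<gamma> has_vector_derivative v) (at 0)"
    using assms(4) unfolding tangent_space_def by blast
  have "((\<lambda>s. F (\<gamma> s)) has_vector_derivative fderiv F p v) (at 0)"
    using has_vector_derivative_along_curve[of F \<gamma> 0 M F] assms(1) \<gamma> by simp
  moreover have "((\<lambda>s. F (\<gamma> s)) has_vector_derivative fderiv G p v) (at 0)"
    using has_vector_derivative_along_curve[of G \<gamma> 0 M F] assms(2,3) \<gamma>
    by (simp add: eq_commute)
  ultimately show ?thesis
    using vector_derivative_unique_at by blast
qed

section \<open>Symmetry of second derivatives\<close>

lemma has_real_derivative_along_line:
  fixes F :: "'a::real_normed_vector \<Rightarrow> 'b::real_inner"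
  assumes "F differentiable (at (a + s *\<^sub>R u))"
  shows "((\<lambda>s. F (a + s *\<^sub>R u) \<bullet> e) has_real_derivative fderiv F (a + s *\<^sub>R u) u \<bullet> e) (at s)"
proof -
  have "((\<lambda>s. a + s *\<^sub>R u) has_derivative (\<lambda>h. h *\<^sub>R u)) (at s)"
    by (auto intro!: derivative_eq_intros)
  from has_derivative_compose[OF this has_derivative_fderiv[OF assms]]
  have "((\<lambda>s. F (a + s *\<^sub>R u) \<bullet> e) has_derivative (\<lambda>h. fderiv F (a + s *\<^sub>R u) (h *\<^sub>R u) \<bullet> e)) (at s)"
    by (rule has_derivative_inner_left)
  then show ?thesis
    using linear_fderiv[OF assms] by (simp add: has_field_derivative_def linear_scale mult.commute[of _ "fderiv F _ _ \<bullet> e"])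
qed

definition second_difference :: "('a::real_vector \<Rightarrow> 'b::real_vector) \<Rightarrow> 'a \<Rightarrow> 'a \<Rightarrow> 'a \<Rightarrow> real \<Rightarrow> 'b" where
  "second_difference A p u v h = A (p + h *\<^sub>R u + h *\<^sub>R v) - A (p + h *\<^sub>R u) - A (p + h *\<^sub>R v) + A p"

lemma second_difference_commute: "second_difference A p u v h = second_difference A p v u h"
  by (simp add: second_difference_def add_ac)

lemma dist_add_scaleR_le:
  fixes u v :: "'a::real_normed_vector"
  assumes "s \<in> {0..h}" and "t \<in> {0..h}"
  shows "dist (p + s *\<^sub>R u + t *\<^sub>R v) p \<le> h * (norm u + norm v)"
proof -
  have "dist (p + s *\<^sub>R u + t *\<^sub>R v) p \<le> s * norm u + t * norm v"
    using assms norm_triangle_ineq[of "s *\<^sub>R u" "t *\<^sub>R v"] by (simp add: dist_norm)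
  also have "\<dots> \<le> h * (norm u + norm v)"
    using assms by (simp add: distrib_left add_mono mult_right_mono)
  finally show ?thesis .
qed

lemma second_difference_mvt:
  fixes A :: "'a::real_normed_vector \<Rightarrow> 'b::real_inner"
  assumes "h > 0"
    and diff: "\<And>s t. s \<in> {0..h} \<Longrightarrow> t \<in> {0..h} \<Longrightarrow>
      A differentiable (at (p + s *\<^sub>R u + t *\<^sub>R v)) \<and>
      (\<lambda>y. fderiv A y u) differentiable (at (p + s *\<^sub>R u + t *\<^sub>R v))"
  shows "\<exists>q. dist q p \<le> h * (norm u + norm v) \<and>
    second_difference A p u v h \<bullet> e = h * h * (fderiv (\<lambda>y. fderiv A y u) q v \<bullet> e)"
proof -
  have "\<exists>\<xi>. 0 < \<xi> \<and> \<xi> < h \<and>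
      (A (p + h *\<^sub>R v + h *\<^sub>R u) \<bullet> e - A (p + h *\<^sub>R u) \<bullet> e) - (A (p + h *\<^sub>R v + 0 *\<^sub>R u) \<bullet> e - A (p + 0 *\<^sub>R u) \<bullet> e)
      = (h - 0) * (fderiv A (p + h *\<^sub>R v + \<xi> *\<^sub>R u) u \<bullet> e - fderiv A (p + \<xi> *\<^sub>R u) u \<bullet> e)"
  proof (rule MVT2[OF \<open>h > 0\<close>])
    fix s assume "0 \<le> s" "s \<le> h"
    then have "A differentiable (at (p + h *\<^sub>R v + s *\<^sub>R u))" "A differentiable (at (p + s *\<^sub>R u))"
      using diff[of s h] diff[of s 0] \<open>h > 0\<close> by (auto simp: add_ac)
    then show "((\<lambda>s. A (p + h *\<^sub>R v + s *\<^sub>R u) \<bullet> e - A (p + s *\<^sub>R u) \<bullet> e) has_real_derivative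
        fderiv A (p + h *\<^sub>R v + s *\<^sub>R u) u \<bullet> e - fderiv A (p + s *\<^sub>R u) u \<bullet> e) (at s)"
      by (intro DERIV_diff has_real_derivative_along_line)
  qed
  then obtain \<xi> where \<xi>: "0 < \<xi>" "\<xi> < h" and eq1: "second_difference A p u v h \<bullet> e
      = h * (fderiv A (p + \<xi> *\<^sub>R u + h *\<^sub>R v) u \<bullet> e - fderiv A (p + \<xi> *\<^sub>R u + 0 *\<^sub>R v) u \<bullet> e)"
    by (auto simp: second_difference_def algebra_simps inner_diff_left inner_add_left)
  have "\<exists>\<eta>. 0 < \<eta> \<and> \<eta> < h \<and>
      fderiv A (p + \<xi> *\<^sub>R u + h *\<^sub>R v) u \<bullet> e - fderiv A (p + \<xi> *\<^sub>R u + 0 *\<^sub>R v) u \<bullet> e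
      = (h - 0) * (fderiv (\<lambda>y. fderiv A y u) (p + \<xi> *\<^sub>R u + \<eta> *\<^sub>R v) v \<bullet> e)"
    using \<xi> diff by (intro MVT2[OF \<open>h > 0\<close>] has_real_derivative_along_line) auto
  then obtain \<eta> where \<eta>: "0 < \<eta>" "\<eta> < h" and eq2:
    "fderiv A (p + \<xi> *\<^sub>R u + h *\<^sub>R v) u \<bullet> e - fderiv A (p + \<xi> *\<^sub>R u + 0 *\<^sub>R v) u \<bullet> e
      = h * (fderiv (\<lambda>y. fderiv A y u) (p + \<xi> *\<^sub>R u + \<eta> *\<^sub>R v) v \<bullet> e)"
    by auto
  show ?thesis
    using eq1 eq2 \<xi> \<eta> dist_add_scaleR_le[of \<xi> h \<eta> p u v] by auto
qed

lemma second_difference_quotient_tendsto: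
  fixes A :: "'a::real_normed_vector \<Rightarrow> 'b::real_inner"
  assumes diff: "\<forall>\<^sub>F x in nhds p. A differentiable (at x) \<and> (\<lambda>y. fderiv A y u) differentiable (at x)"
    and cont: "isCont (\<lambda>y. fderiv (\<lambda>z. fderiv A z u) y v) p"
  shows "((\<lambda>h. second_difference A p u v h \<bullet> e / (h * h))
    \<longlongrightarrow> fderiv (\<lambda>y. fderiv A y u) p v \<bullet> e) (at_right 0)"
proof (rule tendstoI)
  fix \<epsilon> :: real assume "\<epsilon> > 0"
  define c where "c y = fderiv (\<lambda>z. fderiv A z u) y v \<bullet> e" for y
  have "isCont c p"
    unfolding c_def using cont by (intro continuous_intros)
  then obtain \<delta> where "\<delta> > 0" and \<delta>: "\<And>y. dist y p < \<delta> \<Longrightarrow> dist (c y) (c p) < \<epsilon>"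
    using \<open>\<epsilon> > 0\<close> unfolding continuous_at_eps_delta by blast
  obtain d where "d > 0" and d: "\<And>x. dist x p \<le> d \<Longrightarrow>
      A differentiable (at x) \<and> (\<lambda>y. fderiv A y u) differentiable (at x)"
    using diff unfolding eventually_nhds_metric_le by blast
  define b where "b = min d \<delta> / (norm u + norm v + 1)"
  have "b > 0"
    using \<open>d > 0\<close> \<open>\<delta> > 0\<close> by (simp add: b_def add_nonneg_pos)
  have small: "h * (norm u + norm v) < min d \<delta>" if "0 < h" "h < b" for h
  proof -
    have "h * (norm u + norm v) \<le> h * (norm u + norm v + 1)"
      using that by simp
    also have "\<dots> < min d \<delta>"
      using that by (simp add: b_def pos_less_divide_eq add_nonneg_pos)
    finally show ?thesis .
  qed
  show "\<forall>\<^sub>F h in at_right 0. dist (second_difference A p u v h \<bullet> e / (h * h)) (c p) < \<epsilon>"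
    unfolding eventually_at_right_field
  proof (intro exI[of _ b] conjI allI impI)
    fix h :: real assume "0 < h" "h < b"
    then have "dist (p + s *\<^sub>R u + t *\<^sub>R v) p \<le> d" if "s \<in> {0..h}" "t \<in> {0..h}" for s t
      using dist_add_scaleR_le[OF that, of p u v] small[of h] by linarith
    then obtain q where "dist q p \<le> h * (norm u + norm v)"
      and q: "second_difference A p u v h \<bullet> e = h * h * c q"
      using second_difference_mvt[OF \<open>0 < h\<close>, of A p u v e] d unfolding c_def by blast
    then have "dist (c q) (c p) < \<epsilon>"
      using small[OF \<open>0 < h\<close> \<open>h < b\<close>] by (intro \<delta>) linarith
    then show "dist (second_difference A p u v h \<bullet> e / (h * h)) (c p) < \<epsilon>"
      using q \<open>0 < h\<close> by simp
  qed (use \<open>b > 0\<close> in auto)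
qed

text \<open>Weaker than \<open>C\<^sup>2\<close> near \<open>p\<close>: the second derivatives need only be continuous at \<open>p\<close>,
  which is all that Schwarz's theorem at \<open>p\<close> uses.\<close>
definition c2_at :: "('a::real_normed_vector \<Rightarrow> 'b::real_normed_vector) \<Rightarrow> 'a \<Rightarrow> bool" where
  "c2_at A p \<longleftrightarrow>
     (\<forall>\<^sub>F x in nhds p. A differentiable (at x) \<and> (\<forall>u. (\<lambda>y. fderiv A y u) differentiable (at x))) \<and>
     (\<forall>u v. isCont (\<lambda>y. fderiv (\<lambda>z. fderiv A z u) y v) p)"

lemma c2_at_differentiable: "c2_at A p \<Longrightarrow> A differentiable (at p)"
  unfolding c2_at_def using eventually_nhds_x_imp_x by blast

lemma fderiv_fderiv_symmetric:
  fixes A :: "'a::real_normed_vector \<Rightarrow> 'b::euclidean_space"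
  assumes "c2_at A p"
  shows "fderiv (\<lambda>y. fderiv A y u) p v = fderiv (\<lambda>y. fderiv A y v) p u"
proof (rule euclidean_eqI)
  fix e :: 'b
  have diff: "\<forall>\<^sub>F x in nhds p. A differentiable (at x) \<and> (\<lambda>y. fderiv A y w) differentiable (at x)" for w
    using assms unfolding c2_at_def by (auto elim: eventually_mono)
  have cont: "isCont (\<lambda>y. fderiv (\<lambda>z. fderiv A z w) y w') p" for w w'
    using assms unfolding c2_at_def by blast
  have "((\<lambda>h. second_difference A p u v h \<bullet> e / (h * h)) \<longlongrightarrow> fderiv (\<lambda>y. fderiv A y u) p v \<bullet> e) (at_right 0)"
    by (rule second_difference_quotient_tendsto[OF diff cont])
  moreover have "((\<lambda>h. second_difference A p u v h \<bullet> e / (h * h)) \<longlongrightarrow> fderiv (\<lambda>y. fderiv A y v) p u \<bullet> e) (at_right 0)"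
    unfolding second_difference_commute[of A p u v] by (rule second_difference_quotient_tendsto[OF diff cont])
  ultimately show "fderiv (\<lambda>y. fderiv A y u) p v \<bullet> e = fderiv (\<lambda>y. fderiv A y v) p u \<bullet> e"
    by (rule tendsto_unique[OF trivial_limit_at_right_real])
qed

section \<open>Brackets of vector fields on the ambient space\<close>

lemma linear_eq_sum_Basis:
  fixes f :: "'a::euclidean_space \<Rightarrow> 'b::real_vector"
  assumes "linear f"
  shows "f u = (\<Sum>i\<in>Basis. (u \<bullet> i) *\<^sub>R f i)"
proof -
  have "f u = f (\<Sum>i\<in>Basis. (u \<bullet> i) *\<^sub>R i)"
    by (simp add: euclidean_representation)
  also have "\<dots> = (\<Sum>i\<in>Basis. (u \<bullet> i) *\<^sub>R f i)"
    by (simp add: linear_sum[OF assms] linear_scale[OF assms])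
  finally show ?thesis .
qed

lemma fderiv_linear_family:
  fixes L :: "'a::real_normed_vector \<Rightarrow> 'c::euclidean_space \<Rightarrow> 'b::real_normed_vector"
  assumes lin: "\<forall>\<^sub>F y in nhds p. linear (L y)" and diff: "\<And>u. (\<lambda>y. L y u) differentiable (at p)"
  shows "fderiv (\<lambda>y. L y u) p w = (\<Sum>i\<in>Basis. (u \<bullet> i) *\<^sub>R fderiv (\<lambda>y. L y i) p w)"
proof -
  have "((\<lambda>y. \<Sum>i\<in>Basis. (u \<bullet> i) *\<^sub>R L y i) has_derivative
      (\<lambda>w. \<Sum>i\<in>Basis. (u \<bullet> i) *\<^sub>R fderiv (\<lambda>y. L y i) p w)) (at p)"
    using diff by (intro has_derivative_sum has_derivative_scaleR_right has_derivative_fderiv)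
  moreover have "\<forall>\<^sub>F y in at p. (\<Sum>i\<in>Basis. (u \<bullet> i) *\<^sub>R L y i) = L y u"
    using lin by (intro eventually_at_of_nhds) (auto elim!: eventually_mono intro: linear_eq_sum_Basis[symmetric])
  moreover have "(\<Sum>i\<in>Basis. (u \<bullet> i) *\<^sub>R L p i) = L p u"
    using lin eventually_nhds_x_imp_x linear_eq_sum_Basis by metis
  ultimately have "((\<lambda>y. L y u) has_derivative
      (\<lambda>w. \<Sum>i\<in>Basis. (u \<bullet> i) *\<^sub>R fderiv (\<lambda>y. L y i) p w)) (at p)"
    by (rule has_derivative_transform_eventually) simp
  then show ?thesis
    by (rule fderiv_eq)
qed

lemma has_derivative_linear_family_apply:
  fixes L :: "'a::real_normed_vector \<Rightarrow> 'c::euclidean_space \<Rightarrow> 'b::real_normed_vector"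
  assumes lin: "\<forall>\<^sub>F y in nhds p. linear (L y)" and diff: "\<And>u. (\<lambda>y. L y u) differentiable (at p)"
    and A: "(A has_derivative A') (at p)"
  shows "((\<lambda>y. L y (A y)) has_derivative (\<lambda>w. fderiv (\<lambda>y. L y (A p)) p w + L p (A' w))) (at p)"
proof -
  have "linear (L p)"
    using lin eventually_nhds_x_imp_x by blast
  have "((\<lambda>y. \<Sum>i\<in>Basis. (A y \<bullet> i) *\<^sub>R L y i) has_derivative
      (\<lambda>w. \<Sum>i\<in>Basis. (A p \<bullet> i) *\<^sub>R fderiv (\<lambda>y. L y i) p w + (A' w \<bullet> i) *\<^sub>R L p i)) (at p)"
    using diff A
    by (intro has_derivative_sum has_derivative_scaleR has_derivative_fderiv has_derivative_inner_left)
  moreover have "\<forall>\<^sub>F y in at p. (\<Sum>i\<in>Basis. (A y \<bullet> i) *\<^sub>R L y i) = L y (A y)"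
    using lin by (intro eventually_at_of_nhds) (auto elim!: eventually_mono intro: linear_eq_sum_Basis[symmetric])
  moreover have "(\<Sum>i\<in>Basis. (A p \<bullet> i) *\<^sub>R L p i) = L p (A p)"
    by (rule linear_eq_sum_Basis[OF \<open>linear (L p)\<close>, symmetric])
  ultimately have "((\<lambda>y. L y (A y)) has_derivative
      (\<lambda>w. \<Sum>i\<in>Basis. (A p \<bullet> i) *\<^sub>R fderiv (\<lambda>y. L y i) p w + (A' w \<bullet> i) *\<^sub>R L p i)) (at p)"
    by (rule has_derivative_transform_eventually) simp
  moreover have "(\<Sum>i\<in>Basis. (A p \<bullet> i) *\<^sub>R fderiv (\<lambda>y. L y i) p w + (A' w \<bullet> i) *\<^sub>R L p i)
      = fderiv (\<lambda>y. L y (A p)) p w + L p (A' w)" for w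
    unfolding fderiv_linear_family[OF lin diff, of "A p"] linear_eq_sum_Basis[OF \<open>linear (L p)\<close>, of "A' w"]
    by (simp add: sum.distrib)
  ultimately show ?thesis
    by simp
qed

definition bracket :: "('a::euclidean_space \<Rightarrow> 'a) \<Rightarrow> ('a \<Rightarrow> 'a) \<Rightarrow> 'a \<Rightarrow> 'a" where
  "bracket A C y = fderiv C y (A y) - fderiv A y (C y)"

lemma bracket_self: "bracket A A p = 0"
  by (simp add: bracket_def)

lemma bracket_add_right:
  assumes "A differentiable (at p)" "B differentiable (at p)" "C differentiable (at p)"
  shows "bracket A (\<lambda>x. B x + C x) p = bracket A B p + bracket A C p"
proof -
  have "fderiv (\<lambda>x. B x + C x) p w = fderiv B p w + fderiv C p w" for w
    using assms by (intro fderiv_eq has_derivative_add has_derivative_fderiv)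
  then show ?thesis
    using linear_fderiv[OF assms(1)] by (simp add: bracket_def linear_add)
qed

lemma bracket_scaleR_right:
  assumes "A differentiable (at p)" "f differentiable (at p)" "B differentiable (at p)"
  shows "bracket A (\<lambda>x. f x *\<^sub>R B x) p = fderiv f p (A p) *\<^sub>R B p + f p *\<^sub>R bracket A B p"
proof -
  have "fderiv (\<lambda>x. f x *\<^sub>R B x) p w = f p *\<^sub>R fderiv B p w + fderiv f p w *\<^sub>R B p" for w
    using assms by (intro fderiv_eq has_derivative_scaleR has_derivative_fderiv)
  then show ?thesis
    using linear_fderiv[OF assms(1)] by (simp add: bracket_def linear_scale scaleR_diff_right)
qed

lemma bracket_tangent_cong:
  assumes "B differentiable (at p)" "F differentiable (at p)"
    and "\<forall>\<^sub>F x in nhds p. x \<in> M \<longrightarrow> B x = F x" and "p \<in> M" and "A p \<in> tangent_space M p"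
  shows "bracket A B p = bracket A F p"
  using fderiv_tangent_eq[OF assms(1-3,5)] eventually_nhds_x_imp_x[OF assms(3)] assms(4)
  by (simp add: bracket_def)

lemma c2_at_eventually_linear: "c2_at A p \<Longrightarrow> \<forall>\<^sub>F y in nhds p. linear (fderiv A y)"
  unfolding c2_at_def by (auto elim: eventually_mono intro: linear_fderiv)

lemma c2_at_fderiv_differentiable: "c2_at A p \<Longrightarrow> (\<lambda>y. fderiv A y u) differentiable (at p)"
  unfolding c2_at_def using eventually_nhds_x_imp_x by blast

lemma has_derivative_bracket:
  fixes A C :: "'a::euclidean_space \<Rightarrow> 'a"
  assumes "c2_at A p" "c2_at C p"
  shows "(bracket A C has_derivative
    (\<lambda>w. fderiv (\<lambda>y. fderiv C y (A p)) p w + fderiv C p (fderiv A p w)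
       - (fderiv (\<lambda>y. fderiv A y (C p)) p w + fderiv A p (fderiv C p w)))) (at p)"
  unfolding bracket_def[abs_def]
  using assms
  by (intro has_derivative_diff has_derivative_linear_family_apply c2_at_eventually_linear
      c2_at_fderiv_differentiable has_derivative_fderiv c2_at_differentiable)

lemma bracket_differentiable: "c2_at A p \<Longrightarrow> c2_at C p \<Longrightarrow> bracket A C differentiable (at p)"
  using has_derivative_bracket differentiableI by blast

lemma jacobi_bracket:
  fixes A B C :: "'a::euclidean_space \<Rightarrow> 'a"
  assumes "c2_at A p" "c2_at B p" "c2_at C p"
  shows "bracket A (bracket B C) p + bracket B (bracket C A) p + bracket C (bracket A B) p = 0"
proof -
  have lin: "linear (fderiv A p)" "linear (fderiv B p)" "linear (fderiv C p)"
    using assms by (simp_all add: linear_fderiv c2_at_differentiable)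
  have sym: "fderiv (\<lambda>y. fderiv A y (B p)) p (C p) = fderiv (\<lambda>y. fderiv A y (C p)) p (B p)"
     "fderiv (\<lambda>y. fderiv B y (A p)) p (C p) = fderiv (\<lambda>y. fderiv B y (C p)) p (A p)"
     "fderiv (\<lambda>y. fderiv C y (A p)) p (B p) = fderiv (\<lambda>y. fderiv C y (B p)) p (A p)"
    using assms by (simp_all add: fderiv_fderiv_symmetric)
  show ?thesis
    unfolding bracket_def[of _ "bracket _ _"]
      fderiv_eq[OF has_derivative_bracket[OF assms(1,2)]]
      fderiv_eq[OF has_derivative_bracket[OF assms(2,3)]]
      fderiv_eq[OF has_derivative_bracket[OF assms(3,1)]]
    unfolding bracket_def
    using sym by (simp add: linear_diff[OF lin(1)] linear_diff[OF lin(2)] linear_diff[OF lin(3)] algebra_simps)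
qed

section \<open>The frame relations in ambient form\<close>

lemma jacobi_frame_relation:
  fixes a1 a2 r :: "'a::euclidean_space \<Rightarrow> 'a"
  assumes c2: "c2_at a1 p" "c2_at a2 p" "c2_at r p"
    and i: "i differentiable (at p)" and k: "k differentiable (at p)"
    and "p \<in> M" and tangent: "a1 p \<in> tangent_space M p" "a2 p \<in> tangent_space M p" "r p \<in> tangent_space M p"
    and rel: "\<forall>\<^sub>F x in nhds p. x \<in> M \<longrightarrow>
      bracket a2 r x = a1 x \<and> bracket a1 a2 x = r x + i x *\<^sub>R a1 x \<and> bracket r a1 x = k x *\<^sub>R a2 x"
  shows "(fderiv k p (a2 p) + i p * k p) *\<^sub>R a2 p + fderiv i p (r p) *\<^sub>R a1 p = 0"
proof -
  have d: "a1 differentiable (at p)" "a2 differentiable (at p)" "r differentiable (at p)"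
    using c2 by (simp_all add: c2_at_differentiable)
  have "bracket r a1 p = k p *\<^sub>R a2 p"
    using rel \<open>p \<in> M\<close> eventually_nhds_x_imp_x by blast
  have "bracket a1 (bracket a2 r) p = bracket a1 a1 p"
    using rel \<open>p \<in> M\<close> tangent(1) c2 d
    by (intro bracket_tangent_cong bracket_differentiable) (auto elim: eventually_mono)
  moreover have "bracket a2 (bracket r a1) p = bracket a2 (\<lambda>x. k x *\<^sub>R a2 x) p"
    using rel \<open>p \<in> M\<close> tangent(2) c2 d k
    by (intro bracket_tangent_cong bracket_differentiable) (auto elim: eventually_mono)
  moreover have "bracket r (bracket a1 a2) p = bracket r (\<lambda>x. r x + i x *\<^sub>R a1 x) p"
    using rel \<open>p \<in> M\<close> tangent(3) c2 d i
    by (intro bracket_tangent_cong bracket_differentiable) (auto elim: eventually_mono)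
  ultimately have "0 = bracket a2 (\<lambda>x. k x *\<^sub>R a2 x) p + bracket r (\<lambda>x. r x + i x *\<^sub>R a1 x) p"
    using jacobi_bracket[OF c2(1,2,3)] by (simp add: bracket_self)
  also have "\<dots> = fderiv k p (a2 p) *\<^sub>R a2 p + fderiv i p (r p) *\<^sub>R a1 p + i p *\<^sub>R bracket r a1 p"
    using d i k by (simp add: bracket_add_right bracket_scaleR_right bracket_self)
  finally show ?thesis
    using \<open>bracket r a1 p = k p *\<^sub>R a2 p\<close> by (simp add: algebra_simps)
qed

text \<open>Cartan's formula \<open>d\<alpha>(X, Y) = X(\<alpha> Y) - Y(\<alpha> X) - \<alpha>[X, Y]\<close> for \<open>X\<close>, \<open>Y\<close> tangent to \<open>M\<close>
  and in the kernel of \<open>\<alpha>\<close>.\<close>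
lemma exterior_derivative_kernel_fields:
  fixes al a1 a2 :: "'a::euclidean_space \<Rightarrow> 'a"
  assumes d: "al differentiable (at p)" "a1 differentiable (at p)" "a2 differentiable (at p)"
    and ker: "\<forall>\<^sub>F x in nhds p. x \<in> M \<longrightarrow> al x \<bullet> a1 x = 0 \<and> al x \<bullet> a2 x = 0"
    and tangent: "a1 p \<in> tangent_space M p" "a2 p \<in> tangent_space M p"
  shows "fderiv al p (a1 p) \<bullet> a2 p - fderiv al p (a2 p) \<bullet> a1 p = - (al p \<bullet> bracket a1 a2 p)"
proof -
  have D: "fderiv (\<lambda>x. al x \<bullet> a x) p w = al p \<bullet> fderiv a p w + fderiv al p w \<bullet> a p"
    if "a differentiable (at p)" for a w
    using d(1) that by (intro fderiv_eq has_derivative_inner has_derivative_fderiv)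
  have "fderiv (\<lambda>x. al x \<bullet> a2 x) p (a1 p) = fderiv (\<lambda>_. 0) p (a1 p)"
    using d ker tangent(1) by (intro fderiv_tangent_eq) (auto elim: eventually_mono)
  moreover have "fderiv (\<lambda>x. al x \<bullet> a1 x) p (a2 p) = fderiv (\<lambda>_. 0) p (a2 p)"
    using d ker tangent(2) by (intro fderiv_tangent_eq) (auto elim: eventually_mono)
  ultimately show ?thesis
    using D[OF d(2)] D[OF d(3)] fderiv_eq[OF has_derivative_const[of 0]]
    by (simp add: bracket_def inner_diff_right inner_commute)
qed

lemma landsberg_identity_ambient:
  fixes a1 a2 r al :: "'a::euclidean_space \<Rightarrow> 'a"
  assumes c2: "c2_at a1 p" "c2_at a2 p" "c2_at r p"
    and d: "i differentiable (at p)" "k differentiable (at p)" "al differentiable (at p)"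
    and "p \<in> M" and tangent: "a1 p \<in> tangent_space M p" "a2 p \<in> tangent_space M p" "r p \<in> tangent_space M p"
    and rel: "\<forall>\<^sub>F x in nhds p. x \<in> M \<longrightarrow>
      bracket a2 r x = a1 x \<and> bracket a1 a2 x = r x + i x *\<^sub>R a1 x \<and> bracket r a1 x = k x *\<^sub>R a2 x"
    and ker: "\<forall>\<^sub>F x in nhds p. x \<in> M \<longrightarrow> al x \<bullet> a1 x = 0 \<and> al x \<bullet> a2 x = 0"
    and reeb: "al p \<bullet> r p = 1"
  shows "fderiv k p (a2 p) = - (i p * k p)"
proof -
  define \<omega> where "\<omega> w = fderiv al p (a1 p) \<bullet> w - fderiv al p w \<bullet> a1 p" for w
  have "linear \<omega>"
    unfolding \<omega>_def[abs_def] using linear_fderiv[OF d(3)]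
    by (intro linearI) (simp_all add: linear_add linear_scale inner_add_right inner_add_left algebra_simps)
  have "bracket a1 a2 p = r p + i p *\<^sub>R a1 p" and "al p \<bullet> a1 p = 0"
    using rel ker \<open>p \<in> M\<close> eventually_nhds_x_imp_x by blast+
  then have "\<omega> (a2 p) = -1"
    unfolding \<omega>_def using exterior_derivative_kernel_fields[OF d(3) _ _ ker tangent(1,2)] c2 reeb
    by (simp add: c2_at_differentiable inner_add_right)
  moreover have "\<omega> (a1 p) = 0"
    by (simp add: \<omega>_def)
  moreover have "\<omega> ((fderiv k p (a2 p) + i p * k p) *\<^sub>R a2 p + fderiv i p (r p) *\<^sub>R a1 p) = 0"
    using jacobi_frame_relation[OF c2 d(1,2) \<open>p \<in> M\<close> tangent rel] linear_0[OF \<open>linear \<omega>\<close>] by simp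
  ultimately show ?thesis
    by (simp add: linear_add[OF \<open>linear \<omega>\<close>] linear_scale[OF \<open>linear \<omega>\<close>] algebra_simps)
qed

section \<open>Local extensions from the submanifold\<close>

lemma smooth_on_c2_at:
  assumes "smooth_on U g" and "x \<in> U"
  shows "c2_at g x"
proof -
  have "open U" and "ck_on 2 U g"
    using assms(1) unfolding smooth_on_def by blast+
  then have "\<forall>\<^sub>F y in nhds x. y \<in> U"
    using assms(2) eventually_nhds_in_open by blast
  with \<open>ck_on 2 U g\<close> \<open>open U\<close> assms(2) show ?thesis
    unfolding c2_at_def numeral_2_eq_2
    by (auto elim: eventually_mono simp: continuous_on_eq_continuous_at)
qed

text \<open>Agreement with \<open>f\<close> is required around every point near \<open>p\<close>, so that the extension can
  also be used to compute brackets at those points.\<close>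
definition local_extension :: "'a::euclidean_space set \<Rightarrow> ('a \<Rightarrow> 'b::real_normed_vector) \<Rightarrow> ('a \<Rightarrow> 'b) \<Rightarrow> 'a \<Rightarrow> bool" where
  "local_extension M g f p \<longleftrightarrow> (\<forall>\<^sub>F x in nhds p. c2_at g x \<and> (\<forall>\<^sub>F y in nhds x. y \<in> M \<longrightarrow> g y = f y))"

lemma smooth_fun_local_extension:
  assumes "smooth_fun M f" and "p \<in> M"
  obtains g where "local_extension M g f p"
proof -
  obtain U g where "p \<in> U" "smooth_on U g" and agree: "\<forall>x\<in>U \<inter> M. g x = f x"
    using assms unfolding smooth_fun_def by blast
  moreover have "open U"
    using \<open>smooth_on U g\<close> unfolding smooth_on_def by blast
  ultimately have "\<forall>\<^sub>F x in nhds p. \<forall>\<^sub>F y in nhds x. y \<in> U"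
    by (simp add: eventually_eventually eventually_nhds_in_open)
  then have "local_extension M g f p"
    unfolding local_extension_def using smooth_on_c2_at[OF \<open>smooth_on U g\<close>] agree
    by (elim eventually_mono) (auto elim: eventually_mono dest: eventually_nhds_x_imp_x)
  then show ?thesis ..
qed

lemma local_extension_c2_at: "local_extension M g f p \<Longrightarrow> c2_at g p"
  unfolding local_extension_def using eventually_nhds_x_imp_x by blast

lemma local_extension_agree: "local_extension M g f p \<Longrightarrow> \<forall>\<^sub>F y in nhds p. y \<in> M \<longrightarrow> g y = f y"
  unfolding local_extension_def using eventually_nhds_x_imp_x by blast

lemma dir_deriv_eq_fderiv:
  assumes "smooth_fun M f" and "x \<in> M" and "g differentiable (at x)"
    and "\<forall>\<^sub>F y in nhds x. y \<in> M \<longrightarrow> g y = f y" and "v \<in> tangent_space M x"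
  shows "dir_deriv M f x v = fderiv g x v"
proof -
  define g0 where "g0 = (SOME g. \<exists>U. x \<in> U \<and> smooth_on U g \<and> (\<forall>y\<in>U \<inter> M. g y = f y))"
  have "\<exists>g. \<exists>U. x \<in> U \<and> smooth_on U g \<and> (\<forall>y\<in>U \<inter> M. g y = f y)"
    using assms(1,2) unfolding smooth_fun_def by blast
  then have "\<exists>U. x \<in> U \<and> smooth_on U g0 \<and> (\<forall>y\<in>U \<inter> M. g0 y = f y)"
    unfolding g0_def by (rule someI_ex)
  then obtain U where U: "x \<in> U" "smooth_on U g0" "\<forall>y\<in>U \<inter> M. g0 y = f y"
    by blast
  then have "\<forall>\<^sub>F y in nhds x. y \<in> U"
    unfolding smooth_on_def by (intro eventually_nhds_in_open) blast+
  with assms(4) have "\<forall>\<^sub>F y in nhds x. y \<in> M \<longrightarrow> g0 y = g y"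
    by eventually_elim (use U(3) in simp)
  with c2_at_differentiable[OF smooth_on_c2_at[OF U(2,1)]] assms(3)
  have "fderiv g0 x v = fderiv g x v"
    using assms(5) by (rule fderiv_tangent_eq)
  then show ?thesis
    unfolding dir_deriv_def g0_def .
qed

lemma lie_bracket_eq_bracket:
  assumes "vector_field M A" "vector_field M C" and "x \<in> M"
    and "Ae differentiable (at x)" "Ce differentiable (at x)"
    and "\<forall>\<^sub>F y in nhds x. y \<in> M \<longrightarrow> Ae y = A y \<and> Ce y = C y"
  shows "lie_bracket M A C x = bracket Ae Ce x"
proof -
  have "Ae x = A x" "Ce x = C x"
    using assms(3,6) eventually_nhds_x_imp_x by blast+
  moreover have "dir_deriv M C x (A x) = fderiv Ce x (A x)" "dir_deriv M A x (C x) = fderiv Ae x (C x)"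
    using assms by (auto intro!: dir_deriv_eq_fderiv elim: eventually_mono simp: vector_field_def)
  ultimately show ?thesis
    unfolding lie_bracket_def bracket_def by simp
qed

lemma eventually_lie_bracket_eq_bracket:
  assumes "vector_field M A" "vector_field M C"
    and "local_extension M Ae A p" "local_extension M Ce C p"
  shows "\<forall>\<^sub>F x in nhds p. x \<in> M \<longrightarrow> lie_bracket M A C x = bracket Ae Ce x"
  using assms(3,4) unfolding local_extension_def
proof eventually_elim
  case (elim x)
  then have "\<forall>\<^sub>F y in nhds x. y \<in> M \<longrightarrow> Ae y = A y \<and> Ce y = C y"
    by (auto elim: eventually_elim2)
  then show ?case
    using elim by (auto intro: lie_bracket_eq_bracket[OF assms(1,2)] c2_at_differentiable)
qed

lemma flow_line_has_real_derivative:
  fixes f :: "'a::euclidean_space \<Rightarrow> real"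
  assumes "flow_line M X \<psi>" and "vector_field M X" and "smooth_fun M f"
  shows "((\<lambda>s. f (\<psi> s)) has_real_derivative dir_deriv M f (\<psi> t) (X (\<psi> t))) (at t)"
proof -
  have "\<psi> t \<in> M" and \<psi>: "\<forall>s. \<psi> s \<in> M" "(\<psi> has_vector_derivative X (\<psi> t)) (at t)"
    using assms(1) unfolding flow_line_def by blast+
  obtain g where g: "local_extension M g f (\<psi> t)"
    using smooth_fun_local_extension[OF assms(3) \<open>\<psi> t \<in> M\<close>] .
  note agree = local_extension_agree[OF g]
  have "g differentiable (at (\<psi> t))"
    using local_extension_c2_at[OF g] by (rule c2_at_differentiable)
  moreover have "X (\<psi> t) \<in> tangent_space M (\<psi> t)"
    using assms(2) \<open>\<psi> t \<in> M\<close> unfolding vector_field_def by blast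
  ultimately show ?thesis
    using has_vector_derivative_along_curve[OF _ agree \<psi>] dir_deriv_eq_fderiv[OF assms(3) \<open>\<psi> t \<in> M\<close> _ agree]
    by (simp add: has_real_derivative_iff_has_vector_derivative)
qed

lemma landsberg_identity:
  fixes Y :: "'a::euclidean_space set"
  assumes "contact_form Y \<alpha>" and "reeb_field Y \<alpha> R"
    and "contact_canonical_frame Y \<alpha> R X1 X2 I J K" and "\<forall>p\<in>Y. J p = 0" and "p \<in> Y"
  shows "dir_deriv Y K p (X2 p) = - (I p * K p)"
proof -
  have vf: "vector_field Y X1" "vector_field Y X2" "vector_field Y R"
    and sm: "smooth_fun Y I" "smooth_fun Y K" "smooth_fun Y \<alpha>"
    and rel: "\<forall>x\<in>Y. \<alpha> x \<bullet> X1 x = 0 \<and> \<alpha> x \<bullet> X2 x = 0 \<and> \<alpha> x \<bullet> R x = 1 \<and>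
        lie_bracket Y X2 R x = X1 x \<and> lie_bracket Y X1 X2 x = R x + I x *\<^sub>R X1 x \<and>
        lie_bracket Y R X1 x = K x *\<^sub>R X2 x"
    using assms unfolding contact_form_def reeb_field_def contact_canonical_frame_def by auto
  obtain a1 a2 r i k al where ext: "local_extension Y a1 X1 p" "local_extension Y a2 X2 p"
    "local_extension Y r R p" "local_extension Y i I p" "local_extension Y k K p" "local_extension Y al \<alpha> p"
    using vf sm \<open>p \<in> Y\<close> unfolding vector_field_def by (metis smooth_fun_local_extension)
  note agree = ext[THEN local_extension_agree]
  have "\<forall>\<^sub>F x in nhds p. x \<in> Y \<longrightarrow>
      bracket a2 r x = a1 x \<and> bracket a1 a2 x = r x + i x *\<^sub>R a1 x \<and> bracket r a1 x = k x *\<^sub>R a2 x"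
    using eventually_lie_bracket_eq_bracket[OF vf(2,3) ext(2,3)]
      eventually_lie_bracket_eq_bracket[OF vf(1,2) ext(1,2)]
      eventually_lie_bracket_eq_bracket[OF vf(3,1) ext(3,1)] agree(1-5)
    by eventually_elim (use rel in auto)
  moreover have "\<forall>\<^sub>F x in nhds p. x \<in> Y \<longrightarrow> al x \<bullet> a1 x = 0 \<and> al x \<bullet> a2 x = 0"
    using agree(1,2,6) by eventually_elim (use rel in auto)
  moreover have at_p: "a1 p = X1 p" "a2 p = X2 p" "r p = R p" "i p = I p" "k p = K p" "al p = \<alpha> p"
    using agree \<open>p \<in> Y\<close> by (auto dest: eventually_nhds_x_imp_x)
  moreover have tangent: "a1 p \<in> tangent_space Y p" "a2 p \<in> tangent_space Y p" "r p \<in> tangent_space Y p"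
    using vf \<open>p \<in> Y\<close> at_p unfolding vector_field_def by auto
  ultimately have "fderiv k p (a2 p) = - (i p * k p)"
    using ext[THEN local_extension_c2_at] rel \<open>p \<in> Y\<close>
    by (intro landsberg_identity_ambient) (auto simp: c2_at_differentiable)
  moreover have "dir_deriv Y K p (a2 p) = fderiv k p (a2 p)"
    using sm(2) \<open>p \<in> Y\<close> c2_at_differentiable[OF local_extension_c2_at[OF ext(5)]] agree(5) tangent(2)
    by (rule dir_deriv_eq_fderiv)
  ultimately show ?thesis
    using at_p by simp
qed

section \<open>The linear equation along a flow line\<close>

lemma interval_integral_has_real_derivative:
  fixes g :: "real \<Rightarrow> real"
  assumes "\<And>t. isCont g t"
  shows "((\<lambda>u. LBINT \<tau>=0..u. g \<tau>) has_real_derivative g t) (at t)"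
proof -
  define a where "a = min 0 t - 1"
  define b where "b = max 0 t + 1"
  have ab: "a \<le> 0" "0 \<le> b" "a \<le> t" "t \<le> b"
    unfolding a_def b_def by auto
  have "continuous_on {a..b} g"
    using assms by (simp add: continuous_at_imp_continuous_on)
  then have "((\<lambda>u. LBINT \<tau>=0..u. g \<tau>) has_vector_derivative g t) (at t within {a..b})"
    using interval_integral_FTC2[OF ab(1,2) _ ab(3,4)] by (simp add: zero_ereal_def)
  moreover have "t \<in> interior {a..b}"
    unfolding a_def b_def by auto
  ultimately show ?thesis
    by (metis at_within_interior has_real_derivative_iff_has_vector_derivative)
qed

lemma linear_ode_solution:
  fixes f g :: "real \<Rightarrow> real"
  assumes "\<And>t. (f has_real_derivative - (g t * f t)) (at t)" and "\<And>t. isCont g t"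
  shows "f t = f 0 * exp (- (LBINT \<tau>=0..t. g \<tau>))"
proof -
  define G where "G u = (LBINT \<tau>=0..u. g \<tau>)" for u :: real
  have "((\<lambda>u. f u * exp (G u)) has_real_derivative 0) (at u)" for u
  proof -
    have "((\<lambda>u. f u * exp (G u)) has_real_derivative
        - (g u * f u) * exp (G u) + f u * (exp (G u) * g u)) (at u)"
      unfolding G_def using assms interval_integral_has_real_derivative
      by (auto intro!: derivative_eq_intros)
    then show ?thesis
      by (simp add: algebra_simps)
  qed
  then have "f t * exp (G t) = f 0 * exp (G 0)"
    using DERIV_isconst_all[of "\<lambda>u. f u * exp (G u)"] by blast
  moreover have "G 0 = 0"
    unfolding G_def by (simp add: zero_ereal_def[symmetric])
  ultimately show ?thesis
    unfolding G_def[symmetric] by (simp add: exp_minus field_simps)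
qed

theorem theorem1p9:
  fixes Y :: "'a::euclidean_space set"
    and \<alpha> R X1 X2 :: "'a \<Rightarrow> 'a"
    and I J K :: "'a \<Rightarrow> real"
  assumes "closed_manifold 3 Y"
    and "contact_form Y \<alpha>"
    and "reeb_field Y \<alpha> R"
    and "contact_canonical_frame Y \<alpha> R X1 X2 I J K"
    and "\<forall>p\<in>Y. J p = 0"
  shows "(\<forall>\<psi>. flow_line Y X2 \<psi> \<longrightarrow>
            (\<forall>t. K (\<psi> t) = K (\<psi> 0) * exp (- (LBINT \<tau>=0..t. I (\<psi> \<tau>)))))
       \<and> (\<forall>y T. T > 0 \<and> (\<forall>t. y (t + T) = y t) \<and> flow_line Y X2 y \<and>
            K (y T) = K (y 0) \<and> K (y 0) \<noteq> 0 \<longrightarrow> (LBINT \<tau>=0..T. I (y \<tau>)) = 0)"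
proof -
  have X2: "vector_field Y X2" and I: "smooth_fun Y I" and K: "smooth_fun Y K"
    using assms(4) unfolding contact_canonical_frame_def by auto
  have solution: "K (\<psi> t) = K (\<psi> 0) * exp (- (LBINT \<tau>=0..t. I (\<psi> \<tau>)))"
    if \<psi>: "flow_line Y X2 \<psi>" for \<psi> t
  proof (rule linear_ode_solution)
    fix s
    have "\<psi> s \<in> Y"
      using \<psi> unfolding flow_line_def by blast
    then show "((\<lambda>s. K (\<psi> s)) has_real_derivative - (I (\<psi> s) * K (\<psi> s))) (at s)"
      using flow_line_has_real_derivative[OF \<psi> X2 K, of s] landsberg_identity[OF assms(2-5)] by simp
    show "isCont (\<lambda>s. I (\<psi> s)) s"
      using flow_line_has_real_derivative[OF \<psi> X2 I] by (rule DERIV_isCont)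
  qed
  moreover have "(LBINT \<tau>=0..T. I (y \<tau>)) = 0"
    if "flow_line Y X2 y" "K (y T) = K (y 0)" "K (y 0) \<noteq> 0" for y T
    using solution[OF that(1), of T] that(2,3) by simp
  ultimately show ?thesis
    by blast
qed

end
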